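(* Let $M$ be a strongly primary monoid in $\mathcal{C}$ and let $V=\mathbb{R}\otimes_\mathbb{Z}\mathrm{gp}(M)$. The following are equivalent: (a) $\mathcal{M}(M)<\infty$; (b) $\dim\mathsf{cone}_V(M)=1$; (c) $M$ is isomorphic to a numerical monoid.
   Context: Convention: all monoids are commutative, cancellative, and reduced, written additively; $M^\bullet=M\setminus\{0\}$; atoms $\mathcal{A}(M)=M^\bullet\setminus(M^\bullet+M^\bullet)$. $\mathcal{C}$ is the class of monoids isomorphic to a submonoid of a free commutative monoid of finite rank (equivalently, of $(\mathbb{N}^d,+)$). $M$ is regarded as a submonoid of $V$; $\mathsf{cone}_V(M)$ is the set of finite nonnegative linear combinations of elements of $M$. A monoid is primary if it is nontrivial and for all $x,y\in M^\bullet$ there is $n\in\mathbb{N}$ with $ny\in x+M$; it is a BFM if every element is a sum of atoms and each element has finitely many factorization lengths; it is finitary if it is a BFM and there exist a finite $S\subseteq M$ and a positive integer $n$ with $nM^\bullet\subseteq S+M$ (where $nM^\bullet=\{x_1+\dots+x_n:x_i\in M^\bullet\}$); strongly primary means primary and finitary. For $x\in M^\bullet$, $\mathcal{M}(x)$ is the smallest $n\in\mathbb{N}$ with $nM^\bullet\subseteq x+M$ ($\infty$ if none), and $\mathcal{M}(M)=\sup\{\mathcal{M}(a): a\in\mathcal{A}(M)\}\in\mathbb{N}\cup\{\infty\}$. A numerical monoid is a submonoid of $(\mathbb{N},+)$ with finite complement in $\mathbb{N}$. *)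

theory Defs
  imports "HOL-Analysis.Analysis" "HOL-Library.Extended_Nat"
begin

text \<open>Monoids in the class C are modelled as submonoids of (N^d,+), with d = CARD('d).\<close>

definition submonoid :: "'a::comm_monoid_add set \<Rightarrow> bool" where
  "submonoid M \<longleftrightarrow> 0 \<in> M \<and> (\<forall>x\<in>M. \<forall>y\<in>M. x + y \<in> M)"

definition translate :: "'a::comm_monoid_add \<Rightarrow> 'a set \<Rightarrow> 'a set" where
  "translate x M = {x + m | m. m \<in> M}"

definition setsum :: "'a::comm_monoid_add set \<Rightarrow> 'a set \<Rightarrow> 'a set" where
  "setsum S M = {s + m | s m. s \<in> S \<and> m \<in> M}"

definition atoms :: "'a::comm_monoid_add set \<Rightarrow> 'a set" where
  "atoms M = {a. a \<in> M \<and> a \<noteq> 0 \<and>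
      \<not> (\<exists>b c. b \<in> M \<and> b \<noteq> 0 \<and> c \<in> M \<and> c \<noteq> 0 \<and> a = b + c)}"

definition nsums :: "nat \<Rightarrow> 'a::comm_monoid_add set \<Rightarrow> 'a set" where
  "nsums n M = {sum_list xs | xs. length xs = n \<and> set xs \<subseteq> M - {0}}"

definition primary :: "'a::comm_monoid_add set \<Rightarrow> bool" where
  "primary M \<longleftrightarrow> M \<noteq> {0} \<and>
     (\<forall>x\<in>M - {0}. \<forall>y\<in>M - {0}. \<exists>n::nat. sum_list (replicate n y) \<in> translate x M)"

definition fact_lengths :: "'a::comm_monoid_add set \<Rightarrow> 'a \<Rightarrow> nat set" where
  "fact_lengths M x = {length xs | xs. set xs \<subseteq> atoms M \<and> sum_list xs = x}"

definition BFM :: "'a::comm_monoid_add set \<Rightarrow> bool" where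
  "BFM M \<longleftrightarrow> (\<forall>x\<in>M. fact_lengths M x \<noteq> {} \<and> finite (fact_lengths M x))"

definition finitary :: "'a::comm_monoid_add set \<Rightarrow> bool" where
  "finitary M \<longleftrightarrow> BFM M \<and>
     (\<exists>S n. finite S \<and> S \<subseteq> M \<and> n > 0 \<and> nsums n M \<subseteq> setsum S M)"

definition strongly_primary :: "'a::comm_monoid_add set \<Rightarrow> bool" where
  "strongly_primary M \<longleftrightarrow> primary M \<and> finitary M"

definition elem_M :: "'a::comm_monoid_add set \<Rightarrow> 'a \<Rightarrow> enat" where
  "elem_M M x = (if \<exists>n. nsums n M \<subseteq> translate x M
                 then enat (LEAST n. nsums n M \<subseteq> translate x M) else \<infinity>)"

definition monoid_M :: "'a::comm_monoid_add set \<Rightarrow> enat" where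
  "monoid_M M = (SUP a\<in>atoms M. elem_M M a)"

definition numerical_monoid :: "nat set \<Rightarrow> bool" where
  "numerical_monoid N \<longleftrightarrow> submonoid N \<and> finite (UNIV - N)"

definition monoid_iso :: "'a::comm_monoid_add set \<Rightarrow> 'b::comm_monoid_add set \<Rightarrow> ('a \<Rightarrow> 'b) \<Rightarrow> bool" where
  "monoid_iso M N f \<longleftrightarrow> bij_betw f M N \<and> (\<forall>x\<in>M. \<forall>y\<in>M. f (x + y) = f x + f y)"

definition cone_of :: "'a::real_vector set \<Rightarrow> 'a set" where
  "cone_of S = {(\<Sum>i<k. c i *\<^sub>R v i) | (k::nat) c v. \<forall>i<k. c i \<ge> 0 \<and> v i \<in> S}"

definition real_vec :: "nat ^ 'd \<Rightarrow> real ^ 'd" where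
  "real_vec x = (\<chi> i. real (x $ i))"

end

theory Submission
  imports Defs
begin

text \<open>
  All three conditions say that M lies on a ray, i.e. any two elements are proportional.
  For (b) this is linear algebra: the cone spans the same space as M.
  A proportional M embeds additively into \<open>\<nat>\<close> by a coordinate projection; the image is g
  times a numerical monoid, g being the least positive gap between its elements, which gives (c).
  If M is isomorphic to a numerical monoid with all values from F on present, then every element
  whose value exceeds that of a by at least F lies in a + M, and atoms have value below 2F;
  hence \<open>\<M>(M) \<le> 3F\<close>.
  Finally, if \<open>\<M>(M) < \<infinity>\<close>, then n b \<in> a + M for a fixed nonzero b and all atoms a,
  so there are only finitely many atoms. For coordinates i, j pick an atom a with minimal ratio
  \<open>a\<^sub>i / a\<^sub>j\<close>. The additive functional \<open>x\<^sub>i a\<^sub>j - a\<^sub>i x\<^sub>j\<close> is nonnegative on atoms, hence on M,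
  and vanishes at a; since by primality some n a lies in c + M, it vanishes at every c \<in> M.
\<close>

lemma sum_list_in_submonoid: "submonoid M \<Longrightarrow> set xs \<subseteq> M \<Longrightarrow> sum_list xs \<in> M"
  by (induction xs) (auto simp: submonoid_def)

lemma additive_sum_list:
  assumes "\<And>x y. x \<in> M \<Longrightarrow> y \<in> M \<Longrightarrow> f (x + y) = f x + f y" "f 0 = 0"
    and "submonoid M" "set xs \<subseteq> M"
  shows "f (sum_list xs) = (\<Sum>x\<leftarrow>xs. f x)"
  using assms(4) by (induction xs) (auto simp: assms(1,2) sum_list_in_submonoid[OF assms(3)])

lemma sum_list_replicate_component: "sum_list (replicate n (b::nat^'d)) $ i = n * b$i"
  by (induction n) auto

lemma sum_list_replicate_in_nsums: "b \<in> M \<Longrightarrow> b \<noteq> 0 \<Longrightarrow> sum_list (replicate n b) \<in> nsums n M"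
  unfolding nsums_def by (intro CollectI exI[of _ "replicate n b"]) auto

lemma length_le_sum_list: "(\<And>x. x \<in> set xs \<Longrightarrow> 1 \<le> g x) \<Longrightarrow> length xs \<le> (\<Sum>x\<leftarrow>xs. g x :: nat)"
proof (induction xs)
  case (Cons y ys)
  then have "1 \<le> g y" "length ys \<le> (\<Sum>x\<leftarrow>ys. g x)" by auto
  then show ?case by simp
qed simp

lemma elem_M_le_enat:
  assumes "nsums n M \<subseteq> translate a M"
  shows "elem_M M a \<le> enat n"
  using assms unfolding elem_M_def by (auto intro: Least_le)

lemma elem_M_le_enatE:
  assumes "elem_M M a \<le> enat K"
  obtains n where "n \<le> K" "nsums n M \<subseteq> translate a M"
proof -
  have ex: "\<exists>n. nsums n M \<subseteq> translate a M"
    and le: "(LEAST n. nsums n M \<subseteq> translate a M) \<le> K"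
    using assms unfolding elem_M_def by (auto split: if_splits)
  show thesis by (rule that[OF le LeastI_ex[OF ex]])
qed

lemma monoid_M_less_infinity:
  assumes "\<forall>a\<in>atoms M. elem_M M a \<le> enat K"
  shows "monoid_M M < \<infinity>"
proof -
  have "monoid_M M \<le> enat K" unfolding monoid_M_def by (rule SUP_least) (use assms in blast)
  then show ?thesis using enat_ord_simps(4) le_less_trans by blast
qed

lemma mult_in_submonoid_nat: "submonoid (N::nat set) \<Longrightarrow> p \<in> N \<Longrightarrow> k * p \<in> N"
  by (induction k) (auto simp: submonoid_def)

lemma multiples_in_submonoid_nat:
  fixes N :: "nat set"
  assumes N: "submonoid N" and q: "g * q \<in> N" and q1: "g * (q + 1) \<in> N" and n: "q * q \<le> n"
  shows "g * n \<in> N"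
proof (cases "q = 0")
  case True
  then show ?thesis using mult_in_submonoid_nat[OF N q1, of n] by (simp add: mult.commute)
next
  case False
  define k where "k = n div q"
  define r where "r = n mod q"
  have n_eq: "n = k * q + r" unfolding k_def r_def by simp
  have "r < q" unfolding r_def using False by simp
  moreover have "q \<le> k" unfolding k_def using n False by (simp add: div_le_mono[of "q * q" n q, simplified])
  ultimately have "r \<le> k" by simp
  then have "g * n = (k - r) * (g * q) + r * (g * (q + 1))"
    using n_eq by (simp add: algebra_simps diff_mult_distrib)
  moreover have "(k - r) * (g * q) \<in> N" "r * (g * (q + 1)) \<in> N"
    using mult_in_submonoid_nat[OF N] q q1 by auto
  ultimately show ?thesis using N by (simp add: submonoid_def)
qed

lemma submonoid_nat_eventually_multiples:
  fixes N :: "nat set"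
  assumes N: "submonoid N" and p: "p \<in> N" "p > 0"
  obtains g F where "g > 0" "\<forall>n\<in>N. g dvd n" "\<forall>n\<ge>F. g * n \<in> N"
proof -
  define gap where "gap d \<longleftrightarrow> 0 < d \<and> (\<exists>q\<in>N. q + d \<in> N)" for d
  define g where "g = (LEAST d. gap d)"
  have "gap p" unfolding gap_def using p N by (force simp: submonoid_def)
  then have "gap g" unfolding g_def by (rule LeastI)
  then obtain q where q: "q \<in> N" "q + g \<in> N" and g0: "g > 0" unfolding gap_def by blast
  have least: "g \<le> d" if "gap d" for d unfolding g_def using that by (rule Least_le)
  have dvd: "g dvd n" if n: "n \<in> N" for n
  proof (rule ccontr)
    assume "\<not> g dvd n"
    then have r: "0 < n mod g" by (simp add: mod_greater_zero_iff_not_dvd)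
    have "n + (n div g) * q \<in> N" "(n div g) * (q + g) \<in> N"
      using n q N mult_in_submonoid_nat[OF N] by (auto simp: submonoid_def)
    moreover have "n + (n div g) * q = (n div g) * (q + g) + n mod g"
      by (simp add: algebra_simps)
    ultimately have "gap (n mod g)" using r unfolding gap_def by metis
    then show False using least g0 by (meson mod_less_divisor not_le)
  qed
  obtain q' where q': "q = g * q'" using dvd q(1) by blast
  have "g * q' \<in> N" "g * (q' + 1) \<in> N" using q q' by (simp_all add: algebra_simps)
  then have "\<forall>n\<ge>q' * q'. g * n \<in> N" using multiples_in_submonoid_nat[OF N] by blast
  then show ?thesis using that g0 dvd by blast
qed

lemma submonoid_image:
  assumes "submonoid M" "h 0 = 0" "\<And>x y. x \<in> M \<Longrightarrow> y \<in> M \<Longrightarrow> h (x + y) = h x + h y"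
  shows "submonoid (h ` M)"
  unfolding submonoid_def
proof (intro conjI ballI)
  show "0 \<in> h ` M" using assms(1,2) by (metis image_eqI submonoid_def)
  fix u v assume "u \<in> h ` M" "v \<in> h ` M"
  then obtain x y where "x \<in> M" "y \<in> M" "u = h x" "v = h y" by blast
  then show "u + v \<in> h ` M" using assms(1,3) by (metis image_eqI submonoid_def)
qed

lemma monoid_iso_onto_numerical:
  fixes M :: "'a::comm_monoid_add set" and h :: "'a \<Rightarrow> nat"
  assumes M: "submonoid M" and hom: "\<And>x y. x \<in> M \<Longrightarrow> y \<in> M \<Longrightarrow> h (x + y) = h x + h y"
    and inj: "inj_on h M" and x: "x \<in> M" "x \<noteq> 0"
  shows "\<exists>N f. numerical_monoid N \<and> monoid_iso M N f"
proof -
  have "0 \<in> M" using M by (simp add: submonoid_def)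
  then have h0: "h 0 = 0" using hom[of 0 0] by simp
  have "h x \<noteq> h 0" using inj_onD[OF inj _ x(1) \<open>0 \<in> M\<close>] x(2) by blast
  then have "h x > 0" using h0 by simp
  then obtain g F where g0: "g > 0" and dvd: "\<forall>n\<in>h ` M. g dvd n" and F: "\<forall>n\<ge>F. g * n \<in> h ` M"
    using submonoid_nat_eventually_multiples[OF submonoid_image[OF M h0 hom]] x(1) by blast
  define f where "f y = h y div g" for y
  have h_eq: "h y = g * f y" if "y \<in> M" for y
    using dvd that by (simp add: f_def)
  have f_hom: "f (y + z) = f y + f z" if "y \<in> M" "z \<in> M" for y z
    using dvd hom that by (simp add: f_def div_add)
  have "inj_on f M"
  proof (rule inj_onI)
    fix y z assume "y \<in> M" "z \<in> M" "f y = f z"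
    then have "h y = h z" using h_eq by simp
    then show "y = z" using inj_onD[OF inj] \<open>y \<in> M\<close> \<open>z \<in> M\<close> by blast
  qed
  moreover have "submonoid (f ` M)"
    using submonoid_image[OF M _ f_hom] h0 by (simp add: f_def)
  moreover have "UNIV - f ` M \<subseteq> {..<F}"
  proof
    fix n assume n: "n \<in> UNIV - f ` M"
    show "n \<in> {..<F}"
    proof (rule ccontr)
      assume "n \<notin> {..<F}"
      then have "g * n \<in> h ` M" using F by simp
      then obtain y where "y \<in> M" "h y = g * n" by (metis imageE)
      then have "f y = n" using g0 by (simp add: f_def)
      then show False using n \<open>y \<in> M\<close> by blast
    qed
  qed
  ultimately have "numerical_monoid (f ` M)" "monoid_iso M (f ` M) f"
    using f_hom finite_subset[OF _ finite_lessThan]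
    by (auto simp: numerical_monoid_def monoid_iso_def bij_betw_def)
  then show ?thesis by blast
qed

lemma monoid_iso_zero:
  assumes "submonoid M" "monoid_iso M N f"
  shows "f 0 = (0::nat)"
  using assms unfolding submonoid_def monoid_iso_def by (metis add_0 add_cancel_right_right)

lemma monoid_iso_pos:
  assumes M: "submonoid M" and iso: "monoid_iso M N f" and x: "x \<in> M" "x \<noteq> 0"
  shows "f x > (0::nat)"
proof (rule ccontr)
  assume "\<not> f x > 0"
  then have "f x = f 0" using monoid_iso_zero[OF M iso] by simp
  moreover have "0 \<in> M" "inj_on f M" using M iso by (simp_all add: submonoid_def monoid_iso_def bij_betw_def)
  ultimately show False using inj_onD x by metis
qed

lemma monoid_iso_translate_if_le:
  fixes f :: "'a::comm_monoid_add \<Rightarrow> nat"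
  assumes M: "submonoid M" and iso: "monoid_iso M N f" and F: "\<And>n. F \<le> n \<Longrightarrow> n \<in> N"
    and a: "a \<in> M" and s: "s \<in> M" "f a + F \<le> f s"
  shows "s \<in> translate a M"
proof -
  have "f s - f a \<in> f ` M" using F s(2) iso by (simp add: monoid_iso_def bij_betw_def)
  then obtain m where m: "m \<in> M" "f m = f s - f a" by (metis imageE)
  then have "f (a + m) = f s" using iso a s(2) by (simp add: monoid_iso_def)
  moreover have "a + m \<in> M" "inj_on f M"
    using M iso m(1) a by (simp_all add: submonoid_def monoid_iso_def bij_betw_def)
  ultimately have "s = a + m" using s(1) inj_onD by metis
  then show ?thesis using m(1) by (auto simp: translate_def)
qed

lemma monoid_iso_atom_bound:
  fixes f :: "'a::comm_monoid_add \<Rightarrow> nat"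
  assumes M: "submonoid M" and iso: "monoid_iso M N f" and F: "\<And>n. F \<le> n \<Longrightarrow> n \<in> N"
    and F1: "1 \<le> F" and a: "a \<in> atoms M"
  shows "f a < 2 * F"
proof (rule ccontr)
  assume big: "\<not> f a < 2 * F"
  \<comment> \<open>otherwise a splits off the element of value F\<close>
  have aM: "a \<in> M" using a by (simp add: atoms_def)
  have "F \<in> f ` M" "f a - F \<in> f ` M" using F big iso by (auto simp: monoid_iso_def bij_betw_def)
  then obtain u v where uv: "u \<in> M" "v \<in> M" "f u = F" "f v = f a - F" by (metis imageE)
  then have "u \<noteq> 0" "v \<noteq> 0" using monoid_iso_zero[OF M iso] F1 big by auto
  moreover have "f (u + v) = f a" "u + v \<in> M" "inj_on f M"
    using uv iso M big by (simp_all add: submonoid_def monoid_iso_def bij_betw_def)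
  then have "a = u + v" using inj_onD aM by metis
  ultimately show False using a uv(1,2) unfolding atoms_def by blast
qed

lemma numerical_iso_imp_monoid_M_finite:
  fixes M :: "'a::comm_monoid_add set"
  assumes M: "submonoid M" and iso: "monoid_iso M N f" and N: "numerical_monoid N"
  shows "monoid_M M < \<infinity>"
proof -
  obtain F0 where "UNIV - N \<subseteq> {..<F0}"
    using N finite_nat_iff_bounded unfolding numerical_monoid_def by blast
  define F where "F = Suc F0"
  have F1: "1 \<le> F" and F: "\<And>n. F \<le> n \<Longrightarrow> n \<in> N"
    using \<open>UNIV - N \<subseteq> {..<F0}\<close> by (auto simp: F_def)
  have hom: "\<And>x y. x \<in> M \<Longrightarrow> y \<in> M \<Longrightarrow> f (x + y) = f x + f y"
    using iso by (simp add: monoid_iso_def)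
  have "elem_M M a \<le> enat (3 * F)" if a: "a \<in> atoms M" for a
  proof -
    have aM: "a \<in> M" using a by (simp add: atoms_def)
    have "nsums (f a + F) M \<subseteq> translate a M"
    proof
      fix s assume "s \<in> nsums (f a + F) M"
      then obtain xs where xs: "s = sum_list xs" "length xs = f a + F" "set xs \<subseteq> M - {0}"
        unfolding nsums_def by blast
      have xsM: "set xs \<subseteq> M" using xs(3) by blast
      have "f a + F \<le> (\<Sum>x\<leftarrow>xs. f x)"
        using length_le_sum_list[of xs f] monoid_iso_pos[OF M iso] xs(2,3) by force
      also have "\<dots> = f s"
        using additive_sum_list[OF hom monoid_iso_zero[OF M iso] M xsM] xs(1) by simp
      finally show "s \<in> translate a M"
        using monoid_iso_translate_if_le[OF M iso F aM] sum_list_in_submonoid[OF M xsM] xs(1) by blast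
    qed
    then have "elem_M M a \<le> enat (f a + F)" by (rule elem_M_le_enat)
    also have "\<dots> \<le> enat (3 * F)" using monoid_iso_atom_bound[OF M iso F F1 a] by simp
    finally show ?thesis .
  qed
  then show ?thesis by (rule monoid_M_less_infinity[OF ballI])
qed

definition proportional :: "(nat ^ 'd) set \<Rightarrow> bool" where
  "proportional M \<longleftrightarrow> (\<forall>x\<in>M. \<forall>y\<in>M. \<forall>i j. x$i * y$j = x$j * y$i)"

lemma dim_cone_of:
  fixes S :: "'a::euclidean_space set"
  shows "dim (cone_of S) = dim S"
proof (rule antisym)
  have "cone_of S \<subseteq> span S"
    by (auto simp: cone_of_def intro: span_sum span_scale span_base)
  then show "dim (cone_of S) \<le> dim S" by (rule dim_mono)
  have "S \<subseteq> cone_of S"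
  proof
    fix x assume "x \<in> S"
    then show "x \<in> cone_of S" unfolding cone_of_def
      by (intro CollectI exI[of _ "1::nat"] exI[of _ "\<lambda>_. 1::real"] exI[of _ "\<lambda>_. x"]) simp
  qed
  then show "dim S \<le> dim (cone_of S)" by (rule dim_subset)
qed

lemma dim_eq_1_iff_subset_span_singleton:
  fixes S :: "'a::euclidean_space set"
  assumes "v \<in> S" "v \<noteq> 0"
  shows "dim S = 1 \<longleftrightarrow> S \<subseteq> span {v}"
proof
  assume S: "S \<subseteq> span {v}"
  show "dim S = 1"
    using dim_mono[OF S] dim_subset[of "{v}" S] assms by simp
next
  assume dim: "dim S = 1"
  show "S \<subseteq> span {v}"
  proof
    fix x assume x: "x \<in> S"
    show "x \<in> span {v}"
    proof (rule ccontr)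
      assume "x \<notin> span {v}"
      then have "independent {x, v}" "x \<noteq> v"
        using assms(2) by (auto simp: independent_insert span_base)
      then have "2 \<le> dim S"
        using independent_card_le_dim[of "{x, v}" S] x assms(1) by simp
      then show False using dim by simp
    qed
  qed
qed

lemma real_vec_component: "real_vec x $ i = real (x $ i)"
  by (simp add: real_vec_def)

lemma real_vec_in_span_singleton_iff:
  assumes "x \<noteq> 0"
  shows "real_vec y \<in> span {real_vec x} \<longleftrightarrow> (\<forall>i j. y$i * x$j = y$j * x$i)"
proof
  assume "real_vec y \<in> span {real_vec x}"
  then obtain c where "real_vec y = c *\<^sub>R real_vec x" by (auto simp: span_singleton)
  then have "\<forall>i. real (y$i) = c * real (x$i)" by (auto simp: vec_eq_iff real_vec_component)
  then have "real (y$i * x$j) = real (y$j * x$i)" for i j by simp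
  then show "\<forall>i j. y$i * x$j = y$j * x$i" by (metis of_nat_eq_iff)
next
  assume cross: "\<forall>i j. y$i * x$j = y$j * x$i"
  obtain j where j: "x$j \<noteq> 0" using assms by (auto simp: vec_eq_iff)
  have "real_vec y = (real (y$j) / real (x$j)) *\<^sub>R real_vec x"
  unfolding vec_eq_iff
  proof
    fix i
    have "real (y$i) * real (x$j) = real (y$j) * real (x$i)"
      using cross by (metis of_nat_mult)
    then show "real_vec y $ i = ((real (y$j) / real (x$j)) *\<^sub>R real_vec x) $ i"
      using j by (simp add: real_vec_component field_simps)
  qed
  then show "real_vec y \<in> span {real_vec x}" by (auto simp: span_singleton)
qed

lemma proportional_iff_subset_span:
  assumes x: "x \<in> M" "x \<noteq> 0"
  shows "proportional M \<longleftrightarrow> real_vec ` M \<subseteq> span {real_vec x}"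
proof
  assume "proportional M"
  then have cross: "\<forall>i j. y$i * x$j = y$j * x$i" if "y \<in> M" for y
    using that x(1) unfolding proportional_def by blast
  show "real_vec ` M \<subseteq> span {real_vec x}"
  proof
    fix v assume "v \<in> real_vec ` M"
    then obtain y where "y \<in> M" "v = real_vec y" by blast
    then show "v \<in> span {real_vec x}"
      using iffD2[OF real_vec_in_span_singleton_iff[OF x(2)] cross] by simp
  qed
next
  assume span: "real_vec ` M \<subseteq> span {real_vec x}"
  have line: "\<exists>c. \<forall>i. real (y$i) = c * real (x$i)" if y: "y \<in> M" for y
  proof -
    have "real_vec y \<in> span {real_vec x}" using span y by blast
    then obtain c where "real_vec y = c *\<^sub>R real_vec x" by (auto simp: span_singleton)
    then show ?thesis by (auto simp: vec_eq_iff real_vec_component)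
  qed
  show "proportional M" unfolding proportional_def
  proof (intro ballI allI)
    fix y z i j assume "y \<in> M" "z \<in> M"
    obtain c where "\<forall>i. real (y$i) = c * real (x$i)" using line[OF \<open>y \<in> M\<close>] ..
    moreover obtain d where "\<forall>i. real (z$i) = d * real (x$i)" using line[OF \<open>z \<in> M\<close>] ..
    ultimately
    have "real (y$i * z$j) = real (y$j * z$i)" by (simp add: ac_simps)
    then show "y$i * z$j = y$j * z$i" by (rule of_nat_eq_iff[THEN iffD1])
  qed
qed

lemma dim_cone_eq_1_iff_proportional:
  assumes x: "x \<in> M" "x \<noteq> 0"
  shows "dim (cone_of (real_vec ` M)) = 1 \<longleftrightarrow> proportional M"
proof -
  have "real_vec x \<in> real_vec ` M" "real_vec x \<noteq> 0"
    using x by (auto simp: vec_eq_iff real_vec_component)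
  then have "dim (real_vec ` M) = 1 \<longleftrightarrow> real_vec ` M \<subseteq> span {real_vec x}"
    by (rule dim_eq_1_iff_subset_span_singleton)
  then show ?thesis unfolding dim_cone_of proportional_iff_subset_span[OF x] .
qed

lemma finite_bounded_nat_vectors: "finite {x::nat^'d. \<forall>i. x$i \<le> B i}"
proof -
  have "{x::nat^'d. \<forall>i. x$i \<le> B i} = vec_lambda ` (PiE UNIV (\<lambda>i. {..B i}))"
  proof (intro equalityI subsetI)
    fix x :: "nat^'d" assume "x \<in> {x. \<forall>i. x$i \<le> B i}"
    then have "vec_nth x \<in> PiE UNIV (\<lambda>i. {..B i})" by auto
    then show "x \<in> vec_lambda ` (PiE UNIV (\<lambda>i. {..B i}))"
      using image_eqI[of x vec_lambda "vec_nth x"] by simp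
  qed auto
  then show ?thesis by (simp add: finite_PiE)
qed

lemma finite_atoms_if_monoid_M_finite:
  fixes M :: "(nat^'d) set"
  assumes fin: "monoid_M M < \<infinity>" and b: "b \<in> M" "b \<noteq> 0"
  shows "finite (atoms M)"
proof -
  obtain K where K: "monoid_M M = enat K" using fin by (cases "monoid_M M") auto
  have "atoms M \<subseteq> {x. \<forall>i. x$i \<le> K * b$i}"
  proof
    fix a assume "a \<in> atoms M"
    then have "elem_M M a \<le> enat K" unfolding K[symmetric] monoid_M_def by (rule SUP_upper)
    then obtain n where n: "n \<le> K" "nsums n M \<subseteq> translate a M" by (rule elem_M_le_enatE)
    then have "sum_list (replicate n b) \<in> translate a M"
      using sum_list_replicate_in_nsums[OF b] by blast
    then obtain m where "sum_list (replicate n b) = a + m" by (auto simp: translate_def)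
    then have "a$i + m$i = n * b$i" for i by (metis sum_list_replicate_component vector_add_component)
    then have "a$i \<le> K * b$i" for i using n(1) by (metis le_add1 mult_le_mono1 order_trans)
    then show "a \<in> {x. \<forall>i. x$i \<le> K * b$i}" by simp
  qed
  then show ?thesis by (rule finite_subset[OF _ finite_bounded_nat_vectors])
qed

lemma primary_same_support:
  fixes M :: "(nat^'d) set"
  assumes "primary M" "z \<in> M" "z \<noteq> 0" "w \<in> M" "w \<noteq> 0" "z$k > 0"
  shows "w$k > 0"
proof -
  obtain n where "sum_list (replicate n w) \<in> translate z M"
    using assms unfolding primary_def by blast
  then obtain m where "sum_list (replicate n w) = z + m" by (auto simp: translate_def)
  then have "n * w$k = z$k + m$k" by (metis sum_list_replicate_component vector_add_component)
  then show ?thesis using assms(6) by (cases "w$k") auto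
qed

lemma nonneg_on_atoms_imp_nonneg:
  fixes \<phi> :: "'a::comm_monoid_add \<Rightarrow> 'b::ordered_comm_monoid_add"
  assumes M: "submonoid M" "BFM M" and hom: "\<And>x y. \<phi> (x + y) = \<phi> x + \<phi> y" "\<phi> 0 = 0"
    and nonneg: "\<forall>a\<in>atoms M. 0 \<le> \<phi> a" and z: "z \<in> M"
  shows "0 \<le> \<phi> z"
proof -
  obtain xs where xs: "set xs \<subseteq> atoms M" "sum_list xs = z"
    using M(2) z unfolding BFM_def fact_lengths_def by blast
  have "\<phi> z = (\<Sum>x\<leftarrow>xs. \<phi> x)"
    using additive_sum_list[of UNIV \<phi> xs] hom xs(2) by (simp add: submonoid_def)
  also have "0 \<le> \<dots>" using nonneg xs(1) by (intro sum_list_nonneg) auto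
  finally show ?thesis .
qed

lemma primary_nonneg_additive_vanishes:
  fixes \<phi> :: "'a::comm_monoid_add \<Rightarrow> 'b::ordered_comm_monoid_add"
  assumes M: "submonoid M" "primary M" and hom: "\<And>x y. \<phi> (x + y) = \<phi> x + \<phi> y" "\<phi> 0 = 0"
    and nonneg: "\<forall>z\<in>M. 0 \<le> \<phi> z" and a: "a \<in> M" "a \<noteq> 0" "\<phi> a = 0" and c: "c \<in> M"
  shows "\<phi> c = 0"
proof (cases "c = 0")
  case False
  then obtain n m where m: "m \<in> M" "sum_list (replicate n a) = c + m"
    using M(2) a c unfolding primary_def translate_def by blast
  have "\<phi> c + \<phi> m = (\<Sum>x\<leftarrow>replicate n a. \<phi> x)"
    using additive_sum_list[of UNIV \<phi> "replicate n a"] hom m(2) by (simp add: submonoid_def)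
  also have "\<dots> = 0" using a(3) by (induction n) auto
  finally show ?thesis using nonneg c m(1) by (simp add: add_nonneg_eq_0_iff)
qed (use hom in simp)

lemma exists_atom_minimal_ratio:
  fixes M :: "(nat^'d) set"
  assumes fin: "finite (atoms M)" and ne: "atoms M \<noteq> {}" and pos: "\<forall>t\<in>atoms M. t$j > 0"
  obtains a where "a \<in> atoms M" "\<forall>t\<in>atoms M. a$i * t$j \<le> t$i * a$j"
proof -
  define \<rho> where "\<rho> t = real (t$i) / real (t$j)" for t :: "nat^'d"
  have "Min (\<rho> ` atoms M) \<in> \<rho> ` atoms M" using fin ne by simp
  then obtain a where a: "a \<in> atoms M" "\<rho> a = Min (\<rho> ` atoms M)" by (metis imageE)
  have "a$i * t$j \<le> t$i * a$j" if t: "t \<in> atoms M" for t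
  proof -
    have "\<rho> a \<le> \<rho> t" using fin t by (simp add: a(2))
    then have "real (a$i) * real (t$j) \<le> real (t$i) * real (a$j)"
      using pos a(1) t by (simp add: \<rho>_def field_simps)
    then show ?thesis by (metis of_nat_le_iff of_nat_mult)
  qed
  then show thesis using that a(1) by blast
qed

lemma primary_finite_atoms_common_ratio:
  fixes M :: "(nat^'d) set"
  assumes M: "submonoid M" "primary M" "BFM M" and fin: "finite (atoms M)"
    and z: "z \<in> M" "z$j \<noteq> 0"
  obtains a where "a \<in> M" "a$j > 0" "\<forall>w\<in>M. w$i * a$j = a$i * w$j"
proof -
  have "z \<noteq> 0" using z(2) by auto
  have pos: "w$j > 0" if "w \<in> M" "w \<noteq> 0" for w
    using primary_same_support[OF M(2) z(1) \<open>z \<noteq> 0\<close> that] z(2) by simp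
  obtain zs where "set zs \<subseteq> atoms M" "sum_list zs = z"
    using M(3) z(1) unfolding BFM_def fact_lengths_def by blast
  then have ne: "atoms M \<noteq> {}" using \<open>z \<noteq> 0\<close> by (cases zs) auto
  have "\<forall>t\<in>atoms M. t$j > 0" using pos by (simp add: atoms_def)
  then obtain a where a: "a \<in> atoms M" and min: "\<forall>t\<in>atoms M. a$i * t$j \<le> t$i * a$j"
    by (rule exists_atom_minimal_ratio[OF fin ne])
  have aM: "a \<in> M" "a \<noteq> 0" using a by (auto simp: atoms_def)
  define \<phi> where "\<phi> w = int (w$i) * int (a$j) - int (a$i) * int (w$j)" for w :: "nat^'d"
  have hom: "\<phi> (v + w) = \<phi> v + \<phi> w" "\<phi> 0 = 0" for v w
    by (simp_all add: \<phi>_def algebra_simps)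
  have "0 \<le> \<phi> t" if "t \<in> atoms M" for t
  proof -
    have "a$i * t$j \<le> t$i * a$j" using min that by blast
    then have "int (a$i) * int (t$j) \<le> int (t$i) * int (a$j)"
      by (simp only: of_nat_mult[symmetric] of_nat_le_iff)
    then show ?thesis by (simp add: \<phi>_def)
  qed
  then have nonneg: "\<forall>w\<in>M. 0 \<le> \<phi> w" using nonneg_on_atoms_imp_nonneg[OF M(1,3) hom] by blast
  have "\<phi> a = 0" by (simp add: \<phi>_def)
  have "w$i * a$j = a$i * w$j" if "w \<in> M" for w
  proof -
    have "\<phi> w = 0" by (rule primary_nonneg_additive_vanishes[OF M(1,2) hom nonneg aM \<open>\<phi> a = 0\<close> that])
    then have "int (w$i) * int (a$j) = int (a$i) * int (w$j)" by (simp add: \<phi>_def)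
    then show ?thesis by (simp only: of_nat_mult[symmetric] of_nat_eq_iff)
  qed
  then show thesis using that aM(1) pos[OF aM] by blast
qed

lemma proportional_if_finite_atoms:
  fixes M :: "(nat^'d) set"
  assumes M: "submonoid M" "primary M" "BFM M" and fin: "finite (atoms M)"
  shows "proportional M"
  unfolding proportional_def
proof (intro ballI allI)
  fix x y i j assume x: "x \<in> M" and y: "y \<in> M"
  show "x$i * y$j = x$j * y$i"
  proof (cases "\<forall>z\<in>M. z$j = 0")
    case True
    then show ?thesis using x y by simp
  next
    case False
    then obtain z where "z \<in> M" "z$j \<noteq> 0" by blast
    then obtain a where a: "a$j > 0" and line: "\<forall>w\<in>M. w$i * a$j = a$i * w$j"
      by (rule primary_finite_atoms_common_ratio[OF M fin])
    have lx: "x$i * a$j = a$i * x$j" and ly: "y$i * a$j = a$i * y$j" using line x y by blast+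
    have "x$i * y$j * a$j = (x$i * a$j) * y$j" by (simp add: ac_simps)
    also have "\<dots> = x$j * (a$i * y$j)" unfolding lx by (simp add: ac_simps)
    also have "\<dots> = x$j * y$i * a$j" unfolding ly[symmetric] by (simp add: ac_simps)
    finally show ?thesis using a by simp
  qed
qed

lemma proportional_imp_numerical_iso:
  fixes M :: "(nat^'d) set"
  assumes M: "submonoid M" and prp: "proportional M" and x: "x \<in> M" "x \<noteq> 0"
  shows "\<exists>N f. numerical_monoid N \<and> monoid_iso M N f"
proof -
  obtain j where j: "x$j \<noteq> 0" using x(2) by (auto simp: vec_eq_iff)
  have inj: "inj_on (\<lambda>y. y$j) M"
  proof (rule inj_onI)
    fix y z assume yz: "y \<in> M" "z \<in> M" "y$j = z$j"
    have "y$i * x$j = z$i * x$j" for i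
    proof -
      have "y$i * x$j = y$j * x$i" "z$i * x$j = z$j * x$i"
        using prp yz(1,2) x(1) unfolding proportional_def by blast+
      then show ?thesis using yz(3) by simp
    qed
    then show "y = z" using j by (simp add: vec_eq_iff)
  qed
  have hom: "(y + z)$j = y$j + z$j" for y z :: "nat^'d" by simp
  show ?thesis by (rule monoid_iso_onto_numerical[OF M hom inj x])
qed

theorem mainTheorem19:
  fixes M :: "(nat ^ 'd) set"
  assumes "submonoid M"
    and "strongly_primary M"
  shows "(monoid_M M < \<infinity> \<longleftrightarrow> dim (cone_of (real_vec ` M)) = 1)
       \<and> (dim (cone_of (real_vec ` M)) = 1 \<longleftrightarrow>
            (\<exists>N f. numerical_monoid N \<and> monoid_iso M N f))"
proof -
  have primary: "primary M" and BFM: "BFM M"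
    using assms(2) by (auto simp: strongly_primary_def finitary_def)
  obtain x where x: "x \<in> M" "x \<noteq> 0"
    using primary assms(1) unfolding primary_def submonoid_def by blast
  have "monoid_M M < \<infinity> \<Longrightarrow> proportional M"
    by (rule proportional_if_finite_atoms[OF assms(1) primary BFM finite_atoms_if_monoid_M_finite[OF _ x]])
  moreover have "proportional M \<Longrightarrow> \<exists>N f. numerical_monoid N \<and> monoid_iso M N f"
    by (rule proportional_imp_numerical_iso[OF assms(1) _ x])
  moreover have "(\<exists>N f. numerical_monoid N \<and> monoid_iso M N f) \<Longrightarrow> monoid_M M < \<infinity>"
    using numerical_iso_imp_monoid_M_finite[OF assms(1)] by blast
  moreover have "dim (cone_of (real_vec ` M)) = 1 \<longleftrightarrow> proportional M"
    by (rule dim_cone_eq_1_iff_proportional[OF x])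
  ultimately show ?thesis by argo
qed

end
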